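(* Let $\ell_1,\dots,\ell_T\in\mathbb{R}^{n+1}$ be the observed loss vectors (with $\ell_t\in\partial\varphi_t(w_t)$ for proper losses $\varphi_t$ on $\mathbb{R}^{n+1}$ with $\Delta^n\subseteq\operatorname{dom}\partial\varphi_t$), $\widehat{\ell}_t\in\mathbb{R}^{n+1}$ arbitrary predictions, $a\in\Delta^n$, and $\mathrm{Regret}(u,\dots,u)=\sum_{t=1}^T\varphi_t(w_t)-\sum_{t=1}^T\varphi_t(u)$. For $u\in\Delta^n$: (i) If $\eta_1\geqslant\dots\geqslant\eta_{T+1}>0$ and the learner plays $\widetilde{w}_t=\mathscr{N}\big(a\circ e^{-\eta_t\sum_{i=1}^{t-1}\ell_i}\big)$, $w_t=\mathscr{N}\big(\widetilde{w}_t\circ e^{-\eta_t\widehat{\ell}_t}\big)$, then \[\mathrm{Regret}(u,\dots,u)\leqslant\frac{1}{\eta_{T+1}}\Big\langle u,\ln\frac ua\Big\rangle+\sum_{t=1}^T\frac{1}{\eta_t}Q_2^\star\big(\eta_t\lVert\ell_t-\widehat{\ell}_t\rVert_\infty\big)-\sum_{t=1}^T\frac1{\eta_t}\Big\langle w_t,\ln\frac{w_t}{\widetilde{w}_t}\Big\rangle,\] and also \[\mathrm{Regret}(u,\dots,u)\leqslant\frac{1}{\eta_{T+1}}\Big\langle u,\ln\frac ua\Big\rangle+\sum_{t=1}^T\frac{1}{\eta_t}\Phi_{\eta_t}\big(\ell_t,\widehat{\ell}_t\big)-\sum_{t=1}^T\frac1{\eta_t}\Big\langle v_t,\ln\frac{v_t}{\widetilde{w}_t}\Big\rangle,\quad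 v_t=\mathscr{N}\big(\widetilde{w}_t\circ e^{-\eta_t\widehat{\ell}'_t}\big).\] (ii) If $0<\theta_1\leqslant\dots\leqslant\theta_T$ and the learner plays $\widetilde{w}_1=a$, $\widetilde{w}_t=\mathscr{N}\big(\widetilde{w}_{t-1}\circ e^{-\theta_{t-1}\ell_{t-1}}\big)$, $w_t=\mathscr{N}\big(\widetilde{w}_t\circ e^{-\theta_t\widehat{\ell}_t}\big)$, then \[\mathrm{Regret}(u,\dots,u)\leqslant\frac{1}{\theta_1}\Big\langle u,\ln\frac ua\Big\rangle+\sum_{t=1}^T\frac{1}{\theta_t}Q_2^\star\big(\theta_t\lVert\ell_t-\widehat{\ell}_t\rVert_\infty\big)-\sum_{t=1}^T\frac1{\theta_t}\Big\langle w_t,\ln\frac{w_t}{\widetilde{w}_t}\Big\rangle,\] and also \[\mathrm{Regret}(u,\dots,u)\leqslant\frac{1}{\theta_1}\Big\langle u,\ln\frac ua\Big\rangle+\sum_{t=1}^T\frac{1}{\theta_t}\Phi_{\theta_t}\big(\ell_t,\widehat{\ell}_t\big)-\sum_{t=1}^T\frac1{\theta_t}\Big\langle v_t,\ln\frac{v_t}{\widetilde{w}_t}\Big\rangle,\quad v_t=\mathscr{N}\big(\widetilde{w}_t\circ e^{-\theta_t\widehat{\ell}'_t}\big).\]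
   Context: $\Delta^n=\{w\in\mathbb{R}^{n+1}:w\geqslant0,\sum_iw_i=1\}$; $\circ$ is the entrywise product, exponentials/logarithms/ratios are entrywise; $\mathscr{N}(v)=v/\sum_iv_i$; $\langle u,\ln\frac ua\rangle=\sum_iu_i\ln\frac{u_i}{a_i}$ with $0\ln(0/\cdot)=0$ (and $+\infty$ if $u_i>0=a_i$). $Q_\rho^\star(\varkappa)=\frac12\varkappa^2-\frac12(\lvert\varkappa\rvert-\rho)_+^2$ with $x_+=\max\{x,0\}$. $\widehat{\ell}'_t=\lambda\widehat{\ell}_t+(1-\lambda)\ell_t$ with $\lambda=\min\{\lVert\ell_t\rVert_\infty/\lVert\ell_t-\widehat{\ell}_t\rVert_\infty,1\}$ (any $\lambda$ if $\ell_t=\widehat{\ell}_t$). For $\xi>0$ and $\rho=2$, $\Phi_\xi(x^*,\widehat{x}^* )=Q_\rho^\star\big(\xi\min\{\lVert x^*-\widehat{x}^*\rVert_\infty,\lVert x^*\rVert_\infty\}\big)+\xi\lVert x^*\rVert_\infty\min\{\xi(\lVert x^*-\widehat{x}^*\rVert_\infty-\lVert x^*\rVert_\infty)_+,\rho\}$. Subdifferential of a proper function: usual convex-analysis subdifferential. *)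

theory Defs
  imports "HOL-Analysis.Analysis"
begin

text \<open>Probability prob_simplex in R^(n+1), modelled as real^'n (CARD('n) = n+1).\<close>
definition prob_simplex :: "(real^'n) set" where
  "prob_simplex = {w. (\<forall>i. 0 \<le> w$i) \<and> (\<Sum>i\<in>UNIV. w$i) = 1}"

definition had :: "real^'n \<Rightarrow> real^'n \<Rightarrow> real^'n" where
  "had x y = (\<chi> i. x$i * y$i)"

definition vexp :: "real^'n \<Rightarrow> real^'n" where
  "vexp v = (\<chi> i. exp (v$i))"

definition vnorm :: "real^'n \<Rightarrow> real^'n" where
  "vnorm v = (1 / (\<Sum>i\<in>UNIV. v$i)) *\<^sub>R v"

definition kl :: "real^'n \<Rightarrow> real^'n \<Rightarrow> ereal" where
  "kl u a = (if \<exists>i. u$i > 0 \<and> a$i = 0 then \<infinity>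
             else ereal (\<Sum>i\<in>UNIV. if u$i = 0 then 0 else u$i * ln (u$i / a$i)))"

definition Qstar :: "real \<Rightarrow> real \<Rightarrow> real" where
  "Qstar \<rho> k = k\<^sup>2 / 2 - (max (\<bar>k\<bar> - \<rho>) 0)\<^sup>2 / 2"

definition Phi :: "real \<Rightarrow> real^'n \<Rightarrow> real^'n \<Rightarrow> real" where
  "Phi \<xi> x xh = Qstar 2 (\<xi> * min (infnorm (x - xh)) (infnorm x))
      + \<xi> * infnorm x * min (\<xi> * max (infnorm (x - xh) - infnorm x) 0) 2"

text \<open>hat-ell' = lambda hat-ell + (1 - lambda) ell, lambda = min(|ell|_inf / |ell - hat-ell|_inf, 1).
  When ell = hat-ell the result is ell for any lambda (here x/0 = 0 gives lambda = 0).\<close>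
definition hatprime :: "real^'n \<Rightarrow> real^'n \<Rightarrow> real^'n" where
  "hatprime l lh = (let lam = min (infnorm l / infnorm (l - lh)) 1 in lam *\<^sub>R lh + (1 - lam) *\<^sub>R l)"

definition proper :: "('a \<Rightarrow> ereal) \<Rightarrow> bool" where
  "proper f \<longleftrightarrow> (\<forall>x. f x \<noteq> -\<infinity>) \<and> (\<exists>x. f x \<noteq> \<infinity>)"

definition subdiff :: "('a::real_inner \<Rightarrow> ereal) \<Rightarrow> 'a \<Rightarrow> 'a set" where
  "subdiff f x = {g. \<bar>f x\<bar> \<noteq> \<infinity> \<and> (\<forall>y. f x + ereal (g \<bullet> (y - x)) \<le> f y)}"

end

theory Submission
  imports Defs "HOL-Probability.Hoeffding"
begin

text \<open>Both learners play exponential tilts \<open>tilt p x = N(p \<circ> exp x)\<close>. A single round is controlled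
  by the Gibbs variational formula \<open>ln (mgf p x) = max\<^sub>q (q \<bullet> x - KL(q, p))\<close>, attained at
  \<open>q = tilt p x\<close>, together with \<open>ln (mgf w Y) - w \<bullet> Y \<le> Qstar 2 \<kappa>\<close> for \<open>|Y| \<le> \<kappa>\<close> (Hoeffding's
  lemma for \<open>\<kappa> \<le> 2\<close>, a crude tail estimate beyond). For the bound with \<open>Phi\<close> one compares with
  the tilt by the shrunk prediction \<open>hatprime l lh\<close>, which is within
  \<open>min (infnorm (l - lh)) (infnorm l)\<close> of \<open>l\<close>; the price is \<open>infnorm l\<close> times the l1-distance of
  the two tilts, and that distance is at most the sup-distance of their exponents. Summed over
  the rounds the potentials telescope: in (i) the soft-min \<open>- ln (mgf a (- \<eta> *\<^sub>R L)) / \<eta>\<close> of the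
  cumulative loss \<open>L\<close> is antitone in \<open>\<eta>\<close>, in (ii) the potential \<open>KL(u, wt t) / \<theta> t\<close> can only
  shrink when \<open>\<theta>\<close> grows. Finally the subgradients bound the regret by the linearised regret.\<close>

section \<open>Exponential tilting and relative entropy\<close>

definition mgf :: "real^'n \<Rightarrow> real^'n \<Rightarrow> real" where
  "mgf p x = (\<Sum>i\<in>UNIV. p$i * exp (x$i))"

definition tilt :: "real^'n \<Rightarrow> real^'n \<Rightarrow> real^'n" where
  "tilt p x = vnorm (had p (vexp x))"

text \<open>Real-valued version of \<open>kl\<close>; since \<open>ln 0 = 0\<close> it is only meaningful when
  \<open>abs_continuous u p\<close>.\<close>
definition relent :: "real^'n \<Rightarrow> real^'n \<Rightarrow> real" where
  "relent u p = (\<Sum>i\<in>UNIV. if u$i = 0 then 0 else u$i * ln (u$i / p$i))"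

definition abs_continuous :: "real^'n \<Rightarrow> real^'n \<Rightarrow> bool" where
  "abs_continuous u p \<longleftrightarrow> (\<forall>i. 0 < u$i \<longrightarrow> 0 < p$i)"

lemma inner_vec_real: "(x::real^'n) \<bullet> y = (\<Sum>i\<in>UNIV. x$i * y$i)"
  by (simp add: inner_vec_def)

lemma prob_simplexD:
  assumes "p \<in> prob_simplex"
  shows prob_simplex_nonneg: "0 \<le> p$i" and prob_simplex_sum: "(\<Sum>i\<in>UNIV. p$i) = 1"
  using assms by (auto simp: prob_simplex_def)

lemma prob_simplex_ex_pos:
  assumes "p \<in> prob_simplex"
  obtains i where "0 < p$i"
proof -
  obtain i where "p$i \<noteq> 0" using prob_simplex_sum[OF assms] by (metis sum.neutral zero_neq_one)
  then show ?thesis by (intro that[of i]) (use prob_simplex_nonneg[OF assms, of i] in linarith)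
qed

lemma mgf_pos:
  assumes "p \<in> prob_simplex"
  shows "0 < mgf p x"
proof -
  obtain j where "0 < p$j" using prob_simplex_ex_pos[OF assms] .
  then show ?thesis unfolding mgf_def
    by (intro sum_pos2[of UNIV j]) (auto simp: prob_simplex_nonneg[OF assms])
qed

lemma mgf_zero: "p \<in> prob_simplex \<Longrightarrow> mgf p 0 = 1"
  by (simp add: mgf_def prob_simplex_sum)

lemma tilt_nth: "tilt p x $ i = p$i * exp (x$i) / mgf p x"
  by (simp add: tilt_def vnorm_def had_def vexp_def mgf_def)

lemma tilt_in_prob_simplex:
  assumes p: "p \<in> prob_simplex"
  shows "tilt p x \<in> prob_simplex"
proof -
  have "(\<Sum>i\<in>UNIV. tilt p x $ i) = mgf p x / mgf p x"
    by (simp only: tilt_nth mgf_def sum_divide_distrib)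
  then show ?thesis
    using mgf_pos[OF p, of x] prob_simplex_nonneg[OF p]
    by (auto simp: prob_simplex_def tilt_nth)
qed

lemma tilt_pos_iff:
  assumes "p \<in> prob_simplex"
  shows "0 < tilt p x $ i \<longleftrightarrow> 0 < p$i"
  using mgf_pos[OF assms, of x] prob_simplex_nonneg[OF assms, of i]
  by (auto simp: tilt_nth zero_less_mult_iff zero_less_divide_iff)

lemma abs_continuous_tilt:
  "p \<in> prob_simplex \<Longrightarrow> abs_continuous u p \<Longrightarrow> abs_continuous u (tilt p x)"
  by (simp add: abs_continuous_def tilt_pos_iff)

lemma abs_continuous_tilt_self: "p \<in> prob_simplex \<Longrightarrow> abs_continuous (tilt p x) p"
  by (simp add: abs_continuous_def tilt_pos_iff)

lemma mgf_tilt: "mgf (tilt p x) y = mgf p (x + y) / mgf p x"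
  by (simp add: mgf_def tilt_nth exp_add sum_divide_distrib[symmetric] algebra_simps)

lemma tilt_tilt:
  assumes "p \<in> prob_simplex"
  shows "tilt (tilt p x) y = tilt p (x + y)"
  using mgf_pos[OF assms, of x] mgf_pos[OF assms, of "x + y"]
  by (simp add: vec_eq_iff tilt_nth mgf_tilt exp_add)

lemma relent_tilt:
  assumes p: "p \<in> prob_simplex" and u: "u \<in> prob_simplex" and ac: "abs_continuous u p"
  shows "relent u (tilt p x) = relent u p - u \<bullet> x + ln (mgf p x)"
proof -
  have "relent u (tilt p x)
      = (\<Sum>i\<in>UNIV. (if u$i = 0 then 0 else u$i * ln (u$i / p$i)) - u$i * x$i + u$i * ln (mgf p x))"
    unfolding relent_def
  proof (rule sum.cong[OF refl])
    fix i
    show "(if u$i = 0 then 0 else u$i * ln (u$i / tilt p x $ i))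
        = (if u$i = 0 then 0 else u$i * ln (u$i / p$i)) - u$i * x$i + u$i * ln (mgf p x)"
    proof (cases "u$i = 0")
      case False
      then have "0 < u$i" using prob_simplex_nonneg[OF u, of i] by simp
      moreover from this have "0 < p$i" using ac by (simp add: abs_continuous_def)
      ultimately have e: "ln (u$i / tilt p x $ i) = ln (u$i / p$i) - x$i + ln (mgf p x)"
        using mgf_pos[OF p, of x] by (simp add: tilt_nth ln_div ln_mult)
      show ?thesis using False by (simp add: e algebra_simps)
    qed simp
  qed
  also have "\<dots> = relent u p - u \<bullet> x + ln (mgf p x)"
    by (simp add: sum.distrib sum_subtractf relent_def inner_vec_real
        sum_distrib_right[symmetric] prob_simplex_sum[OF u])
  finally show ?thesis .
qed

lemma relent_self: "relent u u = 0"
  by (auto simp: relent_def intro!: sum.neutral)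

lemma relent_nonneg:
  assumes p: "p \<in> prob_simplex" and u: "u \<in> prob_simplex" and ac: "abs_continuous u p"
  shows "0 \<le> relent u p"
proof -
  have "u$i - p$i \<le> (if u$i = 0 then 0 else u$i * ln (u$i / p$i))" for i
  proof (cases "u$i = 0")
    case False
    then have ui: "0 < u$i" using prob_simplex_nonneg[OF u, of i] by simp
    then have "0 < p$i" using ac by (simp add: abs_continuous_def)
    then have "ln (p$i / u$i) \<le> p$i / u$i - 1" and "ln (p$i / u$i) = - ln (u$i / p$i)"
      using ui by (simp add: ln_le_minus_one) (simp add: ln_div ui)
    then have "u$i * (1 - p$i / u$i) \<le> u$i * ln (u$i / p$i)"
      using ui by (intro mult_left_mono) auto
    then show ?thesis using ui by (simp add: algebra_simps)
  qed (simp add: prob_simplex_nonneg[OF p])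
  then have "(\<Sum>i\<in>UNIV. u$i - p$i) \<le> relent u p"
    unfolding relent_def by (rule sum_mono)
  then show ?thesis by (simp add: sum_subtractf prob_simplex_sum[OF u] prob_simplex_sum[OF p])
qed

lemma ln_mgf_ge:
  assumes "p \<in> prob_simplex" "q \<in> prob_simplex" "abs_continuous q p"
  shows "q \<bullet> x - relent q p \<le> ln (mgf p x)"
  using relent_nonneg[OF tilt_in_prob_simplex[OF assms(1), of x] assms(2)
      abs_continuous_tilt[OF assms(1,3), of x]]
    relent_tilt[OF assms, of x]
  by linarith

lemma ln_mgf_eq:
  assumes p: "p \<in> prob_simplex"
  shows "ln (mgf p x) = tilt p x \<bullet> x - relent (tilt p x) p"
  using relent_tilt[OF p tilt_in_prob_simplex[OF p, of x] abs_continuous_tilt_self[OF p, of x], of x]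
  by (simp add: relent_self)

lemma softmin_antimono:
  assumes p: "p \<in> prob_simplex" and "0 < \<eta>'" "\<eta>' \<le> \<eta>"
  shows "- ln (mgf p (- \<eta> *\<^sub>R L)) / \<eta> \<le> - ln (mgf p (- \<eta>' *\<^sub>R L)) / \<eta>'"
proof -
  define q where "q = tilt p (- \<eta>' *\<^sub>R L)"
  have q: "q \<in> prob_simplex" "abs_continuous q p"
    unfolding q_def using p by (simp_all add: tilt_in_prob_simplex abs_continuous_tilt_self)
  have "0 \<le> relent q p" by (rule relent_nonneg[OF p q])
  have "0 < \<eta>" using assms by linarith
  have "- ln (mgf p (- \<eta> *\<^sub>R L)) \<le> \<eta> * (q \<bullet> L) + relent q p"
    using ln_mgf_ge[OF p q, of "- \<eta> *\<^sub>R L"] by simp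
  then have "- ln (mgf p (- \<eta> *\<^sub>R L)) / \<eta> \<le> q \<bullet> L + relent q p / \<eta>"
    using \<open>0 < \<eta>\<close> by (simp add: field_simps)
  also have "\<dots> \<le> q \<bullet> L + relent q p / \<eta>'"
    using assms \<open>0 \<le> relent q p\<close> by (intro add_left_mono divide_left_mono) auto
  also have "\<dots> = (\<eta>' * (q \<bullet> L) + relent q p) / \<eta>'"
    using \<open>0 < \<eta>'\<close> by (simp add: field_simps)
  also have "\<dots> = - ln (mgf p (- \<eta>' *\<^sub>R L)) / \<eta>'"
    using ln_mgf_eq[OF p, of "- \<eta>' *\<^sub>R L"] by (simp add: q_def)
  finally show ?thesis .
qed

section \<open>The log-moment bound\<close>

lemma exp_le_chord:
  fixes y \<kappa> :: real
  assumes "\<bar>y\<bar> \<le> \<kappa>" "0 < \<kappa>"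
  shows "exp y \<le> exp (- \<kappa>) + (y + \<kappa>) / (2 * \<kappa>) * (exp \<kappa> - exp (- \<kappa>))"
proof -
  define t where "t = (y + \<kappa>) / (2 * \<kappa>)"
  have "0 \<le> t" "t \<le> 1" using assms by (auto simp: t_def abs_le_iff field_simps)
  moreover have "y = (1 - t) * (- \<kappa>) + t * \<kappa>" using assms by (simp add: t_def field_simps)
  ultimately have "exp y \<le> (1 - t) * exp (- \<kappa>) + t * exp \<kappa>"
    using convex_onD[OF exp_convex, of t "- \<kappa>" \<kappa>] by simp
  also have "\<dots> = exp (- \<kappa>) + t * (exp \<kappa> - exp (- \<kappa>))" by (simp add: algebra_simps)
  finally show ?thesis by (simp only: t_def)
qed

lemma abs_inner_le_prob_simplex:
  assumes w: "w \<in> prob_simplex" and Y: "\<And>i. \<bar>Y$i\<bar> \<le> \<kappa>"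
  shows "\<bar>w \<bullet> Y\<bar> \<le> \<kappa>"
proof -
  have "\<bar>w \<bullet> Y\<bar> \<le> (\<Sum>i\<in>UNIV. w$i * \<bar>Y$i\<bar>)"
    unfolding inner_vec_real
    by (rule order_trans[OF sum_abs sum_mono]) (simp add: abs_mult prob_simplex_nonneg[OF w])
  also have "\<dots> \<le> (\<Sum>i\<in>UNIV. w$i * \<kappa>)"
    by (intro sum_mono mult_left_mono Y prob_simplex_nonneg[OF w])
  finally show ?thesis by (simp add: sum_distrib_right[symmetric] prob_simplex_sum[OF w])
qed

lemma exp_4_ge: "16 \<le> exp (4::real)"
proof -
  have "(2::real) ^ 4 \<le> exp 1 ^ 4"
    using exp_ge_add_one_self[of "1::real"] by (intro power_mono) auto
  then show ?thesis by (simp add: exp_of_nat_mult[of 4 1, symmetric])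
qed

lemma ln_4_ge: "5/4 \<le> ln (4::real)"
proof -
  have "3/4 \<le> exp (- (1/4::real))" using exp_ge_add_one_self[of "- (1/4::real)"] by simp
  then have "exp (1/4::real) \<le> 4/3" by (simp add: exp_minus field_simps)
  then have "exp 1 * exp (1/4::real) \<le> 3 * (4/3)" using exp_le by (intro mult_mono) auto
  then have "exp (5/4::real) \<le> 4" by (simp flip: exp_add)
  then have "ln (exp (5/4::real)) \<le> ln 4" by (subst ln_le_cancel_iff) auto
  then show ?thesis by simp
qed

lemma ln_bernoulli_mgf_le_tail:
  fixes h s :: real
  assumes h: "4 < h" and s: "0 \<le> s" "s \<le> 1"
  shows "ln (1 + s * (exp h - 1)) - s * h \<le> h - 2"
proof -
  define B where "B = 1 + s * (exp h - 1)"
  have "0 < B" using s h by (simp add: B_def add_pos_nonneg)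
  have "ln 4 + ln B - h = ln (4 * B / exp h)" using \<open>0 < B\<close> by (simp add: ln_div ln_mult)
  also have "\<dots> \<le> 4 * B / exp h - 1" using \<open>0 < B\<close> by (intro ln_le_minus_one) simp
  also have "\<dots> = 4 * exp (- h) + 4 * s * (1 - exp (- h)) - 1"
    by (simp add: B_def exp_minus field_simps)
  also have "\<dots> \<le> 1/4 + s * h - 1"
  proof -
    have "16 \<le> exp h" using exp_4_ge h by (meson exp_le_cancel_iff less_imp_le order_trans)
    then have "exp (- h) \<le> 1/16" by (simp add: exp_minus field_simps)
    moreover have "4 * s * (1 - exp (- h)) \<le> 4 * s" using s by (simp add: mult_left_le)
    moreover have "s * 4 \<le> s * h" using s h by (intro mult_left_mono) auto
    ultimately show ?thesis by linarith
  qed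
  finally show ?thesis using ln_4_ge by (simp add: B_def)
qed

lemma ln_bernoulli_mgf_le_Qstar:
  fixes h s :: real
  assumes "0 \<le> h" "0 \<le> s" "s \<le> 1"
  shows "ln (1 + s * (exp h - 1)) - s * h \<le> Qstar 2 (h / 2)"
proof (cases "h \<le> 4")
  case True
  then have "Qstar 2 (h / 2) = h\<^sup>2 / 8" using assms by (simp add: Qstar_def power_divide)
  moreover have "ln (1 + s * (exp h - 1)) - s * h \<le> h\<^sup>2 / 8"
    using Hoeffdings_lemma_aux[of h s] assms by (simp add: mult.commute)
  ultimately show ?thesis by linarith
next
  case False
  then have "Qstar 2 (h / 2) = h - 2" by (simp add: Qstar_def power2_eq_square field_simps)
  then show ?thesis using ln_bernoulli_mgf_le_tail[of h s] False assms by simp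
qed

text \<open>By convexity of \<open>exp\<close>, among variables with values in \<open>[-\<kappa>, \<kappa>]\<close> and given mean the
  moment generating function is largest for the one supported on \<open>{-\<kappa>, \<kappa>}\<close>.\<close>
lemma ln_mgf_le_bernoulli:
  assumes w: "w \<in> prob_simplex" and Y: "\<And>i. \<bar>Y$i\<bar> \<le> \<kappa>" and "0 < \<kappa>"
  defines "s \<equiv> (w \<bullet> Y + \<kappa>) / (2 * \<kappa>)"
  shows "ln (mgf w Y) - w \<bullet> Y \<le> ln (1 + s * (exp (2 * \<kappa>) - 1)) - s * (2 * \<kappa>)"
proof -
  have "0 \<le> s" using abs_inner_le_prob_simplex[OF w Y] \<open>0 < \<kappa>\<close>
    by (simp add: s_def abs_le_iff)
  define c where "c = (exp \<kappa> - exp (- \<kappa>)) / (2 * \<kappa>)"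
  have "mgf w Y \<le> (\<Sum>i\<in>UNIV. w$i * (exp (- \<kappa>) + (Y$i + \<kappa>) / (2 * \<kappa>) * (exp \<kappa> - exp (- \<kappa>))))"
    unfolding mgf_def
    by (intro sum_mono mult_left_mono exp_le_chord Y \<open>0 < \<kappa>\<close> prob_simplex_nonneg[OF w])
  also have "\<dots> = (\<Sum>i\<in>UNIV. exp (- \<kappa>) * w$i + c * (w$i * Y$i + \<kappa> * w$i))"
    using \<open>0 < \<kappa>\<close> by (intro sum.cong) (simp_all add: c_def field_simps)
  also have "\<dots> = exp (- \<kappa>) + c * (w \<bullet> Y + \<kappa>)"
    by (simp add: inner_vec_real sum.distrib sum_distrib_left[symmetric] prob_simplex_sum[OF w])
  also have "\<dots> = exp (- \<kappa>) + s * (exp \<kappa> - exp (- \<kappa>))"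
    by (simp add: c_def s_def)
  also have "\<dots> = exp (- \<kappa>) * (1 + s * (exp (2 * \<kappa>) - 1))"
    by (simp add: algebra_simps flip: exp_add)
  finally have "mgf w Y \<le> exp (- \<kappa>) * (1 + s * (exp (2 * \<kappa>) - 1))" .
  moreover have "0 < 1 + s * (exp (2 * \<kappa>) - 1)"
    using \<open>0 \<le> s\<close> \<open>0 < \<kappa>\<close> by (simp add: add_pos_nonneg)
  ultimately have "ln (mgf w Y) \<le> - \<kappa> + ln (1 + s * (exp (2 * \<kappa>) - 1))"
    using mgf_pos[OF w, of Y] by (subst (asm) ln_le_cancel_iff[symmetric]) (auto simp: ln_mult)
  moreover have "w \<bullet> Y = s * (2 * \<kappa>) - \<kappa>" using \<open>0 < \<kappa>\<close> by (simp add: s_def field_simps)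
  ultimately show ?thesis by simp
qed

lemma ln_mgf_le_Qstar:
  assumes w: "w \<in> prob_simplex" and Y: "\<And>i. \<bar>Y$i\<bar> \<le> \<kappa>"
  shows "ln (mgf w Y) - w \<bullet> Y \<le> Qstar 2 \<kappa>"
proof (cases "\<kappa> = 0")
  case True
  then have "Y = 0" using Y by (simp add: vec_eq_iff)
  then show ?thesis using True by (simp add: mgf_zero[OF w] Qstar_def)
next
  case False
  then have "0 < \<kappa>" using Y[of undefined] by linarith
  define s where "s = (w \<bullet> Y + \<kappa>) / (2 * \<kappa>)"
  have "0 \<le> s" "s \<le> 1" using abs_inner_le_prob_simplex[OF w Y] \<open>0 < \<kappa>\<close>
    by (auto simp: s_def abs_le_iff field_simps)
  then show ?thesis
    using ln_mgf_le_bernoulli[OF w Y \<open>0 < \<kappa>\<close>] ln_bernoulli_mgf_le_Qstar[of "2 * \<kappa>" s] \<open>0 < \<kappa>\<close>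
    by (simp add: s_def)
qed

section \<open>Total variation between tilts\<close>

lemma sum_abs_diff_le_2:
  assumes p: "p \<in> prob_simplex" and q: "q \<in> prob_simplex"
  shows "(\<Sum>i\<in>UNIV. \<bar>p$i - q$i\<bar>) \<le> 2"
proof -
  have "(\<Sum>i\<in>UNIV. \<bar>p$i - q$i\<bar>) \<le> (\<Sum>i\<in>UNIV. p$i + q$i)"
    by (intro sum_mono) (use prob_simplex_nonneg[OF p] prob_simplex_nonneg[OF q] in \<open>simp add: abs_le_iff\<close>)
  then show ?thesis by (simp add: sum.distrib prob_simplex_sum[OF p] prob_simplex_sum[OF q])
qed

lemma abs_diff_le_chord:
  fixes a b x \<mu> :: real
  assumes "a \<le> x" "x \<le> b" "a \<le> \<mu>" "\<mu> \<le> b"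
  shows "(b - a) * \<bar>x - \<mu>\<bar> \<le> (b - x) * (\<mu> - a) + (x - a) * (b - \<mu>)"
proof (cases "\<mu> \<le> x")
  case True
  have "(b - a) * \<bar>x - \<mu>\<bar> = (b - x) * (\<mu> - a) + (x - a) * (b - \<mu>) - 2 * ((b - x) * (\<mu> - a))"
    using True by (simp add: algebra_simps)
  also have "\<dots> \<le> (b - x) * (\<mu> - a) + (x - a) * (b - \<mu>)" using assms by simp
  finally show ?thesis .
next
  case False
  have "(b - a) * \<bar>x - \<mu>\<bar> = (b - x) * (\<mu> - a) + (x - a) * (b - \<mu>) - 2 * ((x - a) * (b - \<mu>))"
    using False by (simp add: algebra_simps)
  also have "\<dots> \<le> (b - x) * (\<mu> - a) + (x - a) * (b - \<mu>)" using assms by simp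
  finally show ?thesis .
qed

lemma mean_abs_dev_le:
  assumes v: "v \<in> prob_simplex" and X: "\<And>i. a \<le> X$i" "\<And>i. X$i \<le> b"
  defines "\<mu> \<equiv> v \<bullet> X"
  shows "(b - a) * (\<Sum>i\<in>UNIV. v$i * \<bar>X$i - \<mu>\<bar>) \<le> 2 * ((b - \<mu>) * (\<mu> - a))"
proof -
  have vi: "0 \<le> v$i" for i by (rule prob_simplex_nonneg[OF v])
  have "(\<Sum>i\<in>UNIV. v$i * a) \<le> \<mu>" "\<mu> \<le> (\<Sum>i\<in>UNIV. v$i * b)"
    unfolding \<mu>_def inner_vec_real by (auto intro!: sum_mono mult_left_mono X vi)
  then have "a \<le> \<mu>" "\<mu> \<le> b" by (simp_all add: sum_distrib_right[symmetric] prob_simplex_sum[OF v])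
  have sX: "(\<Sum>i\<in>UNIV. v$i * X$i) = \<mu>" unfolding \<mu>_def inner_vec_real ..
  have "(b - a) * (\<Sum>i\<in>UNIV. v$i * \<bar>X$i - \<mu>\<bar>) = (\<Sum>i\<in>UNIV. v$i * ((b - a) * \<bar>X$i - \<mu>\<bar>))"
    by (simp add: sum_distrib_left algebra_simps)
  also have "\<dots> \<le> (\<Sum>i\<in>UNIV. v$i * ((b - X$i) * (\<mu> - a) + (X$i - a) * (b - \<mu>)))"
    by (intro sum_mono mult_left_mono abs_diff_le_chord X vi \<open>a \<le> \<mu>\<close> \<open>\<mu> \<le> b\<close>)
  also have "\<dots> = (b * (\<Sum>i\<in>UNIV. v$i) - (\<Sum>i\<in>UNIV. v$i * X$i)) * (\<mu> - a)
      + ((\<Sum>i\<in>UNIV. v$i * X$i) - a * (\<Sum>i\<in>UNIV. v$i)) * (b - \<mu>)"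
    by (simp add: sum_distrib_left sum_distrib_right sum.distrib sum_subtractf algebra_simps)
  also have "\<dots> = 2 * ((b - \<mu>) * (\<mu> - a))"
    by (simp only: sX prob_simplex_sum[OF v]) (simp add: algebra_simps)
  finally show ?thesis .
qed

lemma two_exp_minus_one_le:
  fixes t :: real
  assumes "0 \<le> t"
  shows "2 * (exp t - 1) \<le> t * (exp t + 1)"
proof -
  define g where "g t = t * (exp t + 1) - 2 * (exp t - 1)" for t :: real
  have "g 0 \<le> g t"
  proof (rule DERIV_nonneg_imp_increasing_open[OF assms])
    fix x :: real
    have "(1 - x) * exp x \<le> exp (- x) * exp x"
      using exp_ge_add_one_self[of "- x"] by (intro mult_right_mono) auto
    then have "0 \<le> 1 - (1 - x) * exp x" by (simp add: exp_minus)
    moreover have "(g has_real_derivative 1 - (1 - x) * exp x) (at x)"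
      unfolding g_def by (auto intro!: derivative_eq_intros simp: algebra_simps)
    ultimately show "\<exists>y. (g has_real_derivative y) (at x) \<and> 0 \<le> y" by blast
  qed (simp add: g_def continuous_intros)
  then show ?thesis by (simp add: g_def)
qed

lemma cosh_minus_one_le_sinh:
  fixes \<epsilon> :: real
  assumes "0 \<le> \<epsilon>"
  shows "2 * (exp \<epsilon> + exp (- \<epsilon>) - 2) \<le> \<epsilon> * (exp \<epsilon> - exp (- \<epsilon>))"
proof -
  have "1 \<le> exp \<epsilon>" using assms by simp
  have "2 * (exp \<epsilon> + exp (- \<epsilon>) - 2) * exp \<epsilon> = 2 * (exp \<epsilon> - 1) * (exp \<epsilon> - 1)"
    by (simp add: exp_minus field_simps power2_eq_square)
  also have "\<dots> \<le> \<epsilon> * (exp \<epsilon> + 1) * (exp \<epsilon> - 1)"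
    using two_exp_minus_one_le[OF assms] \<open>1 \<le> exp \<epsilon>\<close> by (intro mult_right_mono) auto
  also have "\<dots> = \<epsilon> * (exp \<epsilon> - exp (- \<epsilon>)) * exp \<epsilon>"
    by (simp add: exp_minus field_simps)
  finally show ?thesis by simp
qed

lemma sum_abs_tilt_diff_le:
  assumes v: "v \<in> prob_simplex" and D: "\<And>i. \<bar>D$i\<bar> \<le> \<epsilon>"
  shows "(\<Sum>i\<in>UNIV. \<bar>tilt v D $ i - v$i\<bar>) \<le> \<epsilon>"
proof -
  define \<mu> where "\<mu> = mgf v D"
  define a where "a = exp (- \<epsilon>)"
  define b where "b = exp \<epsilon>"
  have "0 < \<mu>" using mgf_pos[OF v] by (simp add: \<mu>_def)
  have "0 \<le> \<epsilon>" using D[of undefined] by linarith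
  have "a \<le> vexp D $ i" "vexp D $ i \<le> b" for i
    using D[of i] by (auto simp: a_def b_def vexp_def abs_le_iff)
  moreover have "v \<bullet> vexp D = \<mu>" by (simp add: \<mu>_def mgf_def inner_vec_real vexp_def)
  ultimately have mad: "(b - a) * (\<Sum>i\<in>UNIV. v$i * \<bar>exp (D$i) - \<mu>\<bar>) \<le> 2 * ((b - \<mu>) * (\<mu> - a))"
    using mean_abs_dev_le[OF v, of a "vexp D" b] by (simp add: vexp_def)
  (* \<open>a * b = 1\<close>, so \<open>(b - \<mu>) * (\<mu> - a) = \<mu> * (a + b - 2) - (\<mu> - 1)\<^sup>2\<close> *)
  have "2 * ((b - \<mu>) * (\<mu> - a)) \<le> 2 * \<mu> * (a + b - 2)"
    using sum_squares_ge_zero[of "\<mu> - 1" 0]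
    by (simp add: a_def b_def algebra_simps power2_eq_square flip: exp_add)
  also have "\<dots> \<le> \<mu> * (\<epsilon> * (b - a))"
    using cosh_minus_one_le_sinh[OF \<open>0 \<le> \<epsilon>\<close>] \<open>0 < \<mu>\<close> by (simp add: a_def b_def add.commute)
  finally have "(b - a) * (\<Sum>i\<in>UNIV. v$i * \<bar>exp (D$i) - \<mu>\<bar>) \<le> (b - a) * (\<epsilon> * \<mu>)"
    using mad by (simp add: algebra_simps)
  moreover have "\<bar>tilt v D $ i - v$i\<bar> = v$i * \<bar>exp (D$i) - \<mu>\<bar> / \<mu>" for i
  proof -
    have "tilt v D $ i - v$i = v$i * (exp (D$i) - \<mu>) / \<mu>"
      using \<open>0 < \<mu>\<close> by (simp add: tilt_nth \<mu>_def[symmetric] field_simps)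
    then show ?thesis using \<open>0 < \<mu>\<close> prob_simplex_nonneg[OF v, of i] by (simp add: abs_mult)
  qed
  ultimately show ?thesis
  proof (cases "a < b")
    case False
    then have "D = 0" using D \<open>0 \<le> \<epsilon>\<close> by (simp add: a_def b_def vec_eq_iff)
    then show ?thesis using mgf_zero[OF v] \<open>0 \<le> \<epsilon>\<close> by (simp add: tilt_nth)
  qed (use \<open>0 < \<mu>\<close> in \<open>simp add: sum_divide_distrib[symmetric] divide_le_eq\<close>)
qed

lemma sum_abs_tilt_tilt_diff_le:
  assumes p: "p \<in> prob_simplex" and d: "\<And>i. \<bar>x$i - x'$i\<bar> \<le> \<epsilon>"
  shows "(\<Sum>i\<in>UNIV. \<bar>tilt p x $ i - tilt p x' $ i\<bar>) \<le> \<epsilon>"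
  using sum_abs_tilt_diff_le[OF tilt_in_prob_simplex[OF p], of "x - x'" \<epsilon> x'] d
  by (simp add: tilt_tilt[OF p])

section \<open>One round\<close>

lemma one_round_bound_Qstar:
  assumes p: "p \<in> prob_simplex" and "0 < \<eta>" and c: "\<And>i. \<bar>l$i - h$i\<bar> \<le> c"
  shows "tilt p (- \<eta> *\<^sub>R h) \<bullet> l + ln (mgf p (- \<eta> *\<^sub>R l)) / \<eta>
         \<le> Qstar 2 (\<eta> * c) / \<eta> - relent (tilt p (- \<eta> *\<^sub>R h)) p / \<eta>"
proof -
  define x where "x = - \<eta> *\<^sub>R h"
  define y where "y = - \<eta> *\<^sub>R (l - h)"
  define w where "w = tilt p x"
  have w: "w \<in> prob_simplex" unfolding w_def by (rule tilt_in_prob_simplex[OF p])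
  have "mgf p (- \<eta> *\<^sub>R l) = mgf p x * mgf w y"
    using mgf_pos[OF p, of x] by (simp add: w_def mgf_tilt x_def y_def algebra_simps)
  then have "ln (mgf p (- \<eta> *\<^sub>R l)) = ln (mgf p x) + ln (mgf w y)"
    using mgf_pos[OF p, of x] mgf_pos[OF w, of y] by (simp add: ln_mult)
  also have "\<dots> \<le> (w \<bullet> x - relent w p) + (w \<bullet> y + Qstar 2 (\<eta> * c))"
    using ln_mgf_eq[OF p, of x] ln_mgf_le_Qstar[OF w, of y "\<eta> * c"] c \<open>0 < \<eta>\<close>
    by (simp add: w_def y_def abs_mult)
  also have "\<dots> = Qstar 2 (\<eta> * c) - relent w p - \<eta> * (w \<bullet> l)"
    by (simp add: x_def y_def inner_diff_right algebra_simps)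
  finally have "(\<eta> * (w \<bullet> l) + ln (mgf p (- \<eta> *\<^sub>R l))) / \<eta>
      \<le> (Qstar 2 (\<eta> * c) - relent w p) / \<eta>"
    using \<open>0 < \<eta>\<close> by (intro divide_right_mono) auto
  then show ?thesis
    using \<open>0 < \<eta>\<close> by (simp add: w_def x_def add_divide_distrib diff_divide_distrib)
qed

lemma hatprime_bounds:
  fixes l lh :: "real^'n"
  shows "\<bar>l$i - hatprime l lh $ i\<bar> \<le> min (infnorm (l - lh)) (infnorm l)"
    and "\<bar>lh$i - hatprime l lh $ i\<bar> \<le> max (infnorm (l - lh) - infnorm l) 0"
proof -
  define N where "N = infnorm (l - lh)"
  define M where "M = infnorm l"
  define lam where "lam = min (M / N) 1"
  have "0 \<le> N" "0 \<le> M" by (simp_all add: N_def M_def infnorm_pos_le)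
  then have "0 \<le> lam" "lam \<le> 1" by (auto simp: lam_def)
  have "lam * N \<le> min N M"
  proof (cases "N = 0")
    case False
    then have "lam * N \<le> M / N * N" "lam * N \<le> 1 * N"
      using \<open>0 \<le> N\<close> unfolding lam_def by (intro mult_right_mono; simp)+
    then show ?thesis using False by simp
  qed (simp add: \<open>0 \<le> M\<close>)
  have "(1 - lam) * N \<le> max (N - M) 0"
  proof (cases "M / N \<le> 1 \<and> N \<noteq> 0")
    case True
    then have "(1 - lam) * N = N - M" by (simp add: lam_def algebra_simps)
    then show ?thesis by simp
  qed (auto simp: lam_def)
  have hp: "hatprime l lh = lam *\<^sub>R lh + (1 - lam) *\<^sub>R l"
    by (simp add: hatprime_def Let_def lam_def M_def N_def)
  have li: "\<bar>l$i - lh$i\<bar> \<le> N" using component_le_infnorm_cart[of "l - lh" i] by (simp add: N_def)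
  have "l$i - hatprime l lh $ i = lam * (l$i - lh$i)"
    and "lh$i - hatprime l lh $ i = (1 - lam) * (lh$i - l$i)"
    by (simp_all add: hp algebra_simps)
  then have "\<bar>l$i - hatprime l lh $ i\<bar> = lam * \<bar>l$i - lh$i\<bar>"
    and "\<bar>lh$i - hatprime l lh $ i\<bar> = (1 - lam) * \<bar>l$i - lh$i\<bar>"
    using \<open>0 \<le> lam\<close> \<open>lam \<le> 1\<close> by (simp_all add: abs_mult abs_minus_commute)
  moreover have "lam * \<bar>l$i - lh$i\<bar> \<le> lam * N" "(1 - lam) * \<bar>l$i - lh$i\<bar> \<le> (1 - lam) * N"
    using li \<open>0 \<le> lam\<close> \<open>lam \<le> 1\<close> by (simp_all add: mult_left_mono)
  ultimately show "\<bar>l$i - hatprime l lh $ i\<bar> \<le> min (infnorm (l - lh)) (infnorm l)"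
    and "\<bar>lh$i - hatprime l lh $ i\<bar> \<le> max (infnorm (l - lh) - infnorm l) 0"
    using \<open>lam * N \<le> min N M\<close> \<open>(1 - lam) * N \<le> max (N - M) 0\<close> by (simp_all add: N_def M_def)
qed

lemma inner_le_infnorm_sum_abs: "x \<bullet> l \<le> infnorm l * (\<Sum>i\<in>UNIV. \<bar>x$i\<bar>)"
proof -
  have "x \<bullet> l \<le> (\<Sum>i\<in>UNIV. \<bar>x$i\<bar> * infnorm l)"
    unfolding inner_vec_real
  proof (rule sum_mono)
    fix i
    show "x$i * l$i \<le> \<bar>x$i\<bar> * infnorm l"
      using component_le_infnorm_cart[of l i] abs_ge_self[of "x$i * l$i"]
      by (simp add: abs_mult) (meson abs_ge_zero mult_left_mono order_trans)
  qed
  then show ?thesis by (simp add: sum_distrib_left mult.commute)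
qed

lemma one_round_bound_Phi:
  assumes p: "p \<in> prob_simplex" and "0 < \<eta>"
  shows "tilt p (- \<eta> *\<^sub>R lh) \<bullet> l + ln (mgf p (- \<eta> *\<^sub>R l)) / \<eta>
         \<le> Phi \<eta> l lh / \<eta> - relent (tilt p (- \<eta> *\<^sub>R hatprime l lh)) p / \<eta>"
proof -
  define N where "N = infnorm (l - lh)"
  define M where "M = infnorm l"
  define w where "w = tilt p (- \<eta> *\<^sub>R lh)"
  define v where "v = tilt p (- \<eta> *\<^sub>R hatprime l lh)"
  have "v \<bullet> l + ln (mgf p (- \<eta> *\<^sub>R l)) / \<eta> \<le> Qstar 2 (\<eta> * min N M) / \<eta> - relent v p / \<eta>"
    unfolding v_def N_def M_def by (intro one_round_bound_Qstar p \<open>0 < \<eta>\<close> hatprime_bounds)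
  moreover have "(w - v) \<bullet> l \<le> M * min (\<eta> * max (N - M) 0) 2"
  proof -
    have "(\<Sum>i\<in>UNIV. \<bar>w$i - v$i\<bar>) \<le> \<eta> * max (N - M) 0"
      unfolding w_def v_def N_def M_def
      using hatprime_bounds(2) \<open>0 < \<eta>\<close>
      by (intro sum_abs_tilt_tilt_diff_le p) (simp add: abs_mult abs_minus_commute flip: right_diff_distrib)
    moreover have "(\<Sum>i\<in>UNIV. \<bar>w$i - v$i\<bar>) \<le> 2"
      unfolding w_def v_def by (intro sum_abs_diff_le_2 tilt_in_prob_simplex p)
    ultimately show ?thesis
      using inner_le_infnorm_sum_abs[of "w - v" l] infnorm_pos_le[of l]
      by (simp add: M_def) (meson min.boundedI mult_left_mono order_trans)
  qed
  moreover have "Phi \<eta> l lh / \<eta> = Qstar 2 (\<eta> * min N M) / \<eta> + M * min (\<eta> * max (N - M) 0) 2"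
    using \<open>0 < \<eta>\<close> by (simp add: Phi_def N_def M_def field_simps)
  ultimately show ?thesis by (simp add: w_def v_def inner_diff_left)
qed

section \<open>Telescoping over the rounds\<close>

lemma sum_le_telescope:
  fixes x y f :: "nat \<Rightarrow> real"
  assumes "m \<le> Suc n" and "\<And>t. t \<in> {m..n} \<Longrightarrow> x t \<le> y t + (f (Suc t) - f t)"
  shows "(\<Sum>t\<in>{m..n}. x t) \<le> (\<Sum>t\<in>{m..n}. y t) + (f (Suc n) - f m)"
proof -
  have "(\<Sum>t\<in>{m..n}. x t) \<le> (\<Sum>t\<in>{m..n}. y t + (f (Suc t) - f t))"
    by (rule sum_mono) (rule assms(2))
  also have "\<dots> = (\<Sum>t\<in>{m..n}. y t) + (f (Suc n) - f m)"
    by (simp add: sum.distrib sum_Suc_diff[OF assms(1)])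
  finally show ?thesis .
qed

lemma ftrl_linear_regret:
  fixes \<eta> R :: "nat \<Rightarrow> real" and w wt l :: "nat \<Rightarrow> real^'n"
  assumes a: "a \<in> prob_simplex" and u: "u \<in> prob_simplex" and ua: "abs_continuous u a"
    and mono: "\<And>s t. 1 \<le> s \<Longrightarrow> s \<le> t \<Longrightarrow> t \<le> T + 1 \<Longrightarrow> \<eta> t \<le> \<eta> s"
    and pos: "0 < \<eta> (T + 1)"
    and wt: "\<And>t. t \<in> {1..T} \<Longrightarrow> wt t = tilt a (- \<eta> t *\<^sub>R (\<Sum>i\<in>{1..<t}. l i))"
    and round: "\<And>t. t \<in> {1..T} \<Longrightarrow> w t \<bullet> l t + ln (mgf (wt t) (- \<eta> t *\<^sub>R l t)) / \<eta> t \<le> R t"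
  shows "(\<Sum>t\<in>{1..T}. (w t - u) \<bullet> l t) \<le> relent u a / \<eta> (T + 1) + (\<Sum>t\<in>{1..T}. R t)"
proof -
  define L where "L t = (\<Sum>i\<in>{1..<t}. l i)" for t
  define F where "F t = - ln (mgf a (- \<eta> t *\<^sub>R L t)) / \<eta> t" for t
  have step: "w t \<bullet> l t \<le> R t + (F (Suc t) - F t)" if t: "t \<in> {1..T}" for t
  proof -
    have "0 < \<eta> (Suc t)" using mono[of "Suc t" "T + 1"] pos t by auto
    have "L (Suc t) = L t + l t" using t by (simp add: L_def sum.atLeastLessThan_Suc)
    then have "mgf (wt t) (- \<eta> t *\<^sub>R l t) = mgf a (- \<eta> t *\<^sub>R L (Suc t)) / mgf a (- \<eta> t *\<^sub>R L t)"
      by (simp add: wt[OF t] L_def mgf_tilt algebra_simps)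
    then have "ln (mgf (wt t) (- \<eta> t *\<^sub>R l t)) / \<eta> t
        = F t - (- ln (mgf a (- \<eta> t *\<^sub>R L (Suc t))) / \<eta> t)"
      by (simp add: F_def ln_div mgf_pos[OF a] mgf_pos[OF a, THEN less_imp_neq, THEN not_sym]
          diff_divide_distrib)
    moreover have "- ln (mgf a (- \<eta> t *\<^sub>R L (Suc t))) / \<eta> t \<le> F (Suc t)"
      unfolding F_def using mono[of t "Suc t"] t by (intro softmin_antimono a \<open>0 < \<eta> (Suc t)\<close>) auto
    ultimately show ?thesis using round[OF t] by linarith
  qed
  have "(\<Sum>t\<in>{1..T}. w t \<bullet> l t) \<le> (\<Sum>t\<in>{1..T}. R t) + (F (Suc T) - F 1)"
    by (rule sum_le_telescope) (simp_all add: step)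
  moreover have "F 1 = 0" by (simp add: F_def L_def mgf_zero[OF a])
  moreover have "F (Suc T) \<le> u \<bullet> L (Suc T) + relent u a / \<eta> (Suc T)"
    using ln_mgf_ge[OF a u ua, of "- \<eta> (Suc T) *\<^sub>R L (Suc T)"] pos
    by (simp add: F_def field_simps)
  moreover have "u \<bullet> L (Suc T) = (\<Sum>t\<in>{1..T}. u \<bullet> l t)"
    by (simp add: L_def inner_sum_right atLeastLessThanSuc_atLeastAtMost)
  ultimately show ?thesis by (simp add: inner_diff_left sum_subtractf)
qed

lemma omd_iterates:
  fixes \<theta> :: "nat \<Rightarrow> real" and wt l :: "nat \<Rightarrow> real^'n"
  assumes a: "a \<in> prob_simplex" and wt1: "wt 1 = a"
    and rec: "\<And>t. t \<in> {2..T} \<Longrightarrow> wt t = tilt (wt (t - 1)) (- \<theta> (t - 1) *\<^sub>R l (t - 1))"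
    and t: "t \<in> {1..T}"
  shows "wt t \<in> prob_simplex \<and> (abs_continuous u a \<longrightarrow> abs_continuous u (wt t))"
  using t
proof (induction t)
  case (Suc t)
  show ?case
  proof (cases "t = 0")
    case False
    then have "t \<in> {1..T}" "wt (Suc t) = tilt (wt t) (- \<theta> t *\<^sub>R l t)"
      using Suc.prems rec[of "Suc t"] by auto
    then show ?thesis using Suc.IH by (simp add: tilt_in_prob_simplex abs_continuous_tilt)
  qed (simp add: wt1[unfolded One_nat_def] a)
qed simp

lemma omd_linear_regret:
  fixes \<theta> R :: "nat \<Rightarrow> real" and w wt l :: "nat \<Rightarrow> real^'n"
  assumes a: "a \<in> prob_simplex" and u: "u \<in> prob_simplex" and ua: "abs_continuous u a"
    and pos: "0 < \<theta> 1" and mono: "\<And>s t. 1 \<le> s \<Longrightarrow> s \<le> t \<Longrightarrow> t \<le> T \<Longrightarrow> \<theta> s \<le> \<theta> t"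
    and wt1: "wt 1 = a"
    and rec: "\<And>t. t \<in> {2..T} \<Longrightarrow> wt t = tilt (wt (t - 1)) (- \<theta> (t - 1) *\<^sub>R l (t - 1))"
    and round: "\<And>t. t \<in> {1..T} \<Longrightarrow> w t \<bullet> l t + ln (mgf (wt t) (- \<theta> t *\<^sub>R l t)) / \<theta> t \<le> R t"
  shows "(\<Sum>t\<in>{1..T}. (w t - u) \<bullet> l t) \<le> relent u a / \<theta> 1 + (\<Sum>t\<in>{1..T}. R t)"
proof -
  have wt: "wt t \<in> prob_simplex" "abs_continuous u (wt t)" if "t \<in> {1..T}" for t
    using omd_iterates[OF a wt1 rec that] ua by auto
  define F where "F t = (if t \<le> T then - relent u (wt t) / \<theta> t else 0)" for t
  have step: "(w t - u) \<bullet> l t \<le> R t + (F (Suc t) - F t)" if t: "t \<in> {1..T}" for t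
  proof -
    have "0 < \<theta> t" using mono[of 1 t] pos t by auto
    define q where "q = tilt (wt t) (- \<theta> t *\<^sub>R l t)"
    have "relent u q = relent u (wt t) + \<theta> t * (u \<bullet> l t) + ln (mgf (wt t) (- \<theta> t *\<^sub>R l t))"
      using relent_tilt[OF wt(1)[OF t] u wt(2)[OF t]] by (simp add: q_def)
    then have "- (u \<bullet> l t) = ln (mgf (wt t) (- \<theta> t *\<^sub>R l t)) / \<theta> t
        + (relent u (wt t) - relent u q) / \<theta> t"
      using \<open>0 < \<theta> t\<close> by (simp add: field_simps)
    moreover have "(relent u (wt t) - relent u q) / \<theta> t \<le> F (Suc t) - F t"
    proof (cases "Suc t \<le> T")
      case True
      then have "q = wt (Suc t)" using rec[of "Suc t"] t by (simp add: q_def)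
      moreover have "relent u (wt (Suc t)) / \<theta> (Suc t) \<le> relent u (wt (Suc t)) / \<theta> t"
        using relent_nonneg[OF wt(1) u wt(2), of "Suc t"] \<open>0 < \<theta> t\<close>
          mono[of t "Suc t"] True t
        by (intro divide_left_mono) auto
      ultimately show ?thesis using True t by (simp add: F_def diff_divide_distrib)
    next
      case False
      have "0 \<le> relent u q"
        unfolding q_def using wt[OF t] by (intro relent_nonneg u tilt_in_prob_simplex abs_continuous_tilt)
      then show ?thesis using False t \<open>0 < \<theta> t\<close> by (simp add: F_def divide_right_mono)
    qed
    ultimately show ?thesis using round[OF t] by (simp add: inner_diff_left)
  qed
  have "(\<Sum>t\<in>{1..T}. (w t - u) \<bullet> l t) \<le> (\<Sum>t\<in>{1..T}. R t) + (F (Suc T) - F 1)"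
    by (rule sum_le_telescope) (simp_all add: step)
  moreover have "F (Suc T) - F 1 \<le> relent u a / \<theta> 1"
    using relent_nonneg[OF a u ua] pos by (simp add: F_def wt1[unfolded One_nat_def])
  ultimately show ?thesis by simp
qed

section \<open>From linearised regret to regret\<close>

lemma regret_le_linear_regret:
  fixes \<phi> :: "'i \<Rightarrow> 'a::real_inner \<Rightarrow> ereal" and w l :: "'i \<Rightarrow> 'a"
  assumes sg: "\<And>t. t \<in> A \<Longrightarrow> l t \<in> subdiff (\<phi> t) (w t)"
    and su: "\<And>t. t \<in> A \<Longrightarrow> subdiff (\<phi> t) u \<noteq> {}"
  shows "(\<Sum>t\<in>A. \<phi> t (w t)) - (\<Sum>t\<in>A. \<phi> t u) \<le> ereal (\<Sum>t\<in>A. (w t - u) \<bullet> l t)"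
proof -
  have fin: "\<phi> t (w t) = ereal (real_of_ereal (\<phi> t (w t)))" "\<phi> t u = ereal (real_of_ereal (\<phi> t u))"
    if "t \<in> A" for t
    using sg[OF that] su[OF that] by (auto simp: subdiff_def ereal_real)
  have le: "real_of_ereal (\<phi> t (w t)) - real_of_ereal (\<phi> t u) \<le> (w t - u) \<bullet> l t" if "t \<in> A" for t
  proof -
    have "\<phi> t (w t) + ereal (l t \<bullet> (u - w t)) \<le> \<phi> t u"
      using sg[OF that] by (simp add: subdiff_def)
    then have "real_of_ereal (\<phi> t (w t)) + l t \<bullet> (u - w t) \<le> real_of_ereal (\<phi> t u)"
      by (subst (asm) fin[OF that], subst (asm) fin(2)[OF that]) simp
    then show ?thesis by (simp add: inner_commute inner_diff_right)
  qed
  have "(\<Sum>t\<in>A. \<phi> t (w t)) = ereal (\<Sum>t\<in>A. real_of_ereal (\<phi> t (w t)))"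
    and "(\<Sum>t\<in>A. \<phi> t u) = ereal (\<Sum>t\<in>A. real_of_ereal (\<phi> t u))"
    unfolding sum_ereal[symmetric] by (intro sum.cong refl fin; assumption)+
  then have "(\<Sum>t\<in>A. \<phi> t (w t)) - (\<Sum>t\<in>A. \<phi> t u)
      = ereal (\<Sum>t\<in>A. real_of_ereal (\<phi> t (w t)) - real_of_ereal (\<phi> t u))"
    by (simp add: sum_subtractf)
  also have "\<dots> \<le> ereal (\<Sum>t\<in>A. (w t - u) \<bullet> l t)"
    using le by (simp add: sum_mono)
  finally show ?thesis .
qed

lemma kl_eq_relent: "p \<in> prob_simplex \<Longrightarrow> abs_continuous q p \<Longrightarrow> kl q p = ereal (relent q p)"
  by (auto simp: kl_def relent_def abs_continuous_def)

lemma kl_eq_infinity: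
  assumes "p \<in> prob_simplex" "\<not> abs_continuous q p"
  shows "kl q p = \<infinity>"
proof -
  obtain i where "0 < q$i" "\<not> 0 < p$i" using assms(2) by (auto simp: abs_continuous_def)
  then have "p$i = 0" using prob_simplex_nonneg[OF assms(1), of i] by simp
  then show ?thesis using \<open>0 < q$i\<close> by (auto simp: kl_def)
qed

lemma regret_le_of_linear_regret_bound:
  fixes \<phi> :: "'i \<Rightarrow> real^'n \<Rightarrow> ereal" and w l q wt :: "'i \<Rightarrow> real^'n" and B \<kappa> :: "'i \<Rightarrow> real"
  assumes sg: "\<And>t. t \<in> A \<Longrightarrow> l t \<in> subdiff (\<phi> t) (w t)"
    and su: "\<And>t. t \<in> A \<Longrightarrow> subdiff (\<phi> t) u \<noteq> {}"
    and a: "a \<in> prob_simplex" and "0 < c"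
    and wt: "\<And>t. t \<in> A \<Longrightarrow> wt t \<in> prob_simplex"
    and q: "\<And>t. t \<in> A \<Longrightarrow> abs_continuous (q t) (wt t)"
    and lin: "abs_continuous u a \<Longrightarrow>
      (\<Sum>t\<in>A. (w t - u) \<bullet> l t) \<le> c * relent u a + (\<Sum>t\<in>A. B t - \<kappa> t * relent (q t) (wt t))"
  shows "(\<Sum>t\<in>A. \<phi> t (w t)) - (\<Sum>t\<in>A. \<phi> t u)
    \<le> ereal c * kl u a + ereal (\<Sum>t\<in>A. B t) - (\<Sum>t\<in>A. ereal (\<kappa> t) * kl (q t) (wt t))"
proof -
  have K: "(\<Sum>t\<in>A. ereal (\<kappa> t) * kl (q t) (wt t)) = ereal (\<Sum>t\<in>A. \<kappa> t * relent (q t) (wt t))"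
    using kl_eq_relent[OF wt q] by (simp del: sum_ereal flip: sum_ereal)
  show ?thesis
  proof (cases "abs_continuous u a")
    case True
    have "(\<Sum>t\<in>A. \<phi> t (w t)) - (\<Sum>t\<in>A. \<phi> t u) \<le> ereal (\<Sum>t\<in>A. (w t - u) \<bullet> l t)"
      by (rule regret_le_linear_regret[OF sg su])
    also have "\<dots> \<le> ereal (c * relent u a + (\<Sum>t\<in>A. B t) - (\<Sum>t\<in>A. \<kappa> t * relent (q t) (wt t)))"
      using lin[OF True] by (simp add: sum_subtractf)
    finally show ?thesis by (simp add: K kl_eq_relent[OF a True])
  next
    case False
    then show ?thesis using \<open>0 < c\<close> by (simp add: K kl_eq_infinity[OF a])
  qed
qed

definition optimistic_regret_bounds ::
    "(nat \<Rightarrow> real^'n \<Rightarrow> ereal) \<Rightarrow> (nat \<Rightarrow> real^'n) \<Rightarrow> (nat \<Rightarrow> real^'n) \<Rightarrow> real^'n \<Rightarrow> real^'n \<Rightarrow>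
      nat \<Rightarrow> real \<Rightarrow> (nat \<Rightarrow> real) \<Rightarrow> (nat \<Rightarrow> real^'n) \<Rightarrow> (nat \<Rightarrow> real^'n) \<Rightarrow> bool" where
  "optimistic_regret_bounds \<phi> l lh a u T c \<eta> w wt \<longleftrightarrow>
     (\<Sum>t\<in>{1..T}. \<phi> t (w t)) - (\<Sum>t\<in>{1..T}. \<phi> t u)
       \<le> ereal c * kl u a
         + ereal (\<Sum>t\<in>{1..T}. 1 / \<eta> t * Qstar 2 (\<eta> t * infnorm (l t - lh t)))
         - (\<Sum>t\<in>{1..T}. ereal (1 / \<eta> t) * kl (w t) (wt t))
     \<and>
     (\<Sum>t\<in>{1..T}. \<phi> t (w t)) - (\<Sum>t\<in>{1..T}. \<phi> t u)
       \<le> ereal c * kl u a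
         + ereal (\<Sum>t\<in>{1..T}. 1 / \<eta> t * Phi (\<eta> t) (l t) (lh t))
         - (\<Sum>t\<in>{1..T}. ereal (1 / \<eta> t) *
              kl (vnorm (had (wt t) (vexp (- \<eta> t *\<^sub>R hatprime (l t) (lh t))))) (wt t))"

lemma optimistic_regret_boundsI:
  fixes \<phi> :: "nat \<Rightarrow> real^'n \<Rightarrow> ereal" and l lh w wt :: "nat \<Rightarrow> real^'n" and \<eta> :: "nat \<Rightarrow> real"
  assumes sg: "\<And>t. t \<in> {1..T} \<Longrightarrow> l t \<in> subdiff (\<phi> t) (w t)"
    and su: "\<And>t. t \<in> {1..T} \<Longrightarrow> subdiff (\<phi> t) u \<noteq> {}"
    and a: "a \<in> prob_simplex" and "0 < c"
    and wt: "\<And>t. t \<in> {1..T} \<Longrightarrow> wt t \<in> prob_simplex"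
    and w: "\<And>t. t \<in> {1..T} \<Longrightarrow> w t = tilt (wt t) (- \<eta> t *\<^sub>R lh t)"
    and \<eta>: "\<And>t. t \<in> {1..T} \<Longrightarrow> 0 < \<eta> t"
    and linear: "\<And>R. abs_continuous u a \<Longrightarrow>
      (\<And>t. t \<in> {1..T} \<Longrightarrow> w t \<bullet> l t + ln (mgf (wt t) (- \<eta> t *\<^sub>R l t)) / \<eta> t \<le> R t) \<Longrightarrow>
      (\<Sum>t\<in>{1..T}. (w t - u) \<bullet> l t) \<le> c * relent u a + (\<Sum>t\<in>{1..T}. R t)"
  shows "optimistic_regret_bounds \<phi> l lh a u T c \<eta> w wt"
  unfolding optimistic_regret_bounds_def
proof (intro conjI regret_le_of_linear_regret_bound[OF sg su a \<open>0 < c\<close> wt])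
  fix t assume t: "t \<in> {1..T}"
  show "abs_continuous (w t) (wt t)"
    using abs_continuous_tilt_self[OF wt[OF t]] by (simp add: w[OF t])
  show "abs_continuous (vnorm (had (wt t) (vexp (- \<eta> t *\<^sub>R hatprime (l t) (lh t))))) (wt t)"
    using abs_continuous_tilt_self[OF wt[OF t]] by (simp add: tilt_def)
next
  assume "abs_continuous u a"
  show "(\<Sum>t\<in>{1..T}. (w t - u) \<bullet> l t) \<le> c * relent u a
      + (\<Sum>t\<in>{1..T}. 1 / \<eta> t * Qstar 2 (\<eta> t * infnorm (l t - lh t)) - 1 / \<eta> t * relent (w t) (wt t))"
  proof (intro linear \<open>abs_continuous u a\<close>)
    fix t assume t: "t \<in> {1..T}"
    have "\<bar>l t $ i - lh t $ i\<bar> \<le> infnorm (l t - lh t)" for i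
      using component_le_infnorm_cart[of "l t - lh t" i] by simp
    then show "w t \<bullet> l t + ln (mgf (wt t) (- \<eta> t *\<^sub>R l t)) / \<eta> t
        \<le> 1 / \<eta> t * Qstar 2 (\<eta> t * infnorm (l t - lh t)) - 1 / \<eta> t * relent (w t) (wt t)"
      using one_round_bound_Qstar[OF wt[OF t] \<eta>[OF t]] by (simp add: w[OF t])
  qed
  show "(\<Sum>t\<in>{1..T}. (w t - u) \<bullet> l t) \<le> c * relent u a
      + (\<Sum>t\<in>{1..T}. 1 / \<eta> t * Phi (\<eta> t) (l t) (lh t) - 1 / \<eta> t *
          relent (vnorm (had (wt t) (vexp (- \<eta> t *\<^sub>R hatprime (l t) (lh t))))) (wt t))"
  proof (intro linear \<open>abs_continuous u a\<close>)
    fix t assume t: "t \<in> {1..T}"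
    show "w t \<bullet> l t + ln (mgf (wt t) (- \<eta> t *\<^sub>R l t)) / \<eta> t
        \<le> 1 / \<eta> t * Phi (\<eta> t) (l t) (lh t) - 1 / \<eta> t *
          relent (vnorm (had (wt t) (vexp (- \<eta> t *\<^sub>R hatprime (l t) (lh t))))) (wt t)"
      using one_round_bound_Phi[OF wt[OF t] \<eta>[OF t]] by (simp add: w[OF t] tilt_def)
  qed
qed

lemma ftrl_regret_bounds:
  fixes \<phi> :: "nat \<Rightarrow> real^'n \<Rightarrow> ereal" and l lh w wt :: "nat \<Rightarrow> real^'n" and \<eta> :: "nat \<Rightarrow> real"
  assumes dom: "\<forall>t\<in>{1..T}. prob_simplex \<subseteq> {x. subdiff (\<phi> t) x \<noteq> {}}"
    and a: "a \<in> prob_simplex" and u: "u \<in> prob_simplex"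
    and mono: "\<forall>s t. 1 \<le> s \<longrightarrow> s \<le> t \<longrightarrow> t \<le> T + 1 \<longrightarrow> \<eta> t \<le> \<eta> s" and pos: "0 < \<eta> (T + 1)"
    and wt: "\<forall>t\<in>{1..T}. wt t = vnorm (had a (vexp (- \<eta> t *\<^sub>R (\<Sum>i\<in>{1..<t}. l i))))"
    and w: "\<forall>t\<in>{1..T}. w t = vnorm (had (wt t) (vexp (- \<eta> t *\<^sub>R lh t)))"
    and sg: "\<forall>t\<in>{1..T}. l t \<in> subdiff (\<phi> t) (w t)"
  shows "optimistic_regret_bounds \<phi> l lh a u T (1 / \<eta> (T + 1)) \<eta> w wt"
proof -
  have antimono: "\<eta> t \<le> \<eta> s" if "1 \<le> s" "s \<le> t" "t \<le> T + 1" for s t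
    using mono that by blast
  have wt': "wt t = tilt a (- \<eta> t *\<^sub>R (\<Sum>i\<in>{1..<t}. l i))" if "t \<in> {1..T}" for t
    using wt that by (simp add: tilt_def)
  show ?thesis
  proof (rule optimistic_regret_boundsI[OF _ _ a])
    fix t assume t: "t \<in> {1..T}"
    show "l t \<in> subdiff (\<phi> t) (w t)" using sg t by blast
    show "subdiff (\<phi> t) u \<noteq> {}" using dom u t by blast
    show "wt t \<in> prob_simplex" using wt'[OF t] by (simp add: tilt_in_prob_simplex[OF a])
    show "w t = tilt (wt t) (- \<eta> t *\<^sub>R lh t)" using w t by (simp add: tilt_def)
    show "0 < \<eta> t" using mono[rule_format, of t "T + 1"] pos t by auto
  next
    fix R assume "abs_continuous u a"
      and "\<And>t. t \<in> {1..T} \<Longrightarrow> w t \<bullet> l t + ln (mgf (wt t) (- \<eta> t *\<^sub>R l t)) / \<eta> t \<le> R t"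
    from ftrl_linear_regret[OF a u this(1) antimono pos wt' this(2)]
    show "(\<Sum>t\<in>{1..T}. (w t - u) \<bullet> l t) \<le> 1 / \<eta> (T + 1) * relent u a + (\<Sum>t\<in>{1..T}. R t)"
      by simp
  qed (use pos in simp)
qed

lemma omd_regret_bounds:
  fixes \<phi> :: "nat \<Rightarrow> real^'n \<Rightarrow> ereal" and l lh w wt :: "nat \<Rightarrow> real^'n" and \<theta> :: "nat \<Rightarrow> real"
  assumes dom: "\<forall>t\<in>{1..T}. prob_simplex \<subseteq> {x. subdiff (\<phi> t) x \<noteq> {}}"
    and a: "a \<in> prob_simplex" and u: "u \<in> prob_simplex"
    and pos: "0 < \<theta> 1" and mono: "\<forall>s t. 1 \<le> s \<longrightarrow> s \<le> t \<longrightarrow> t \<le> T \<longrightarrow> \<theta> s \<le> \<theta> t"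
    and wt1: "wt 1 = a"
    and wt: "\<forall>t\<in>{2..T}. wt t = vnorm (had (wt (t - 1)) (vexp (- \<theta> (t - 1) *\<^sub>R l (t - 1))))"
    and w: "\<forall>t\<in>{1..T}. w t = vnorm (had (wt t) (vexp (- \<theta> t *\<^sub>R lh t)))"
    and sg: "\<forall>t\<in>{1..T}. l t \<in> subdiff (\<phi> t) (w t)"
  shows "optimistic_regret_bounds \<phi> l lh a u T (1 / \<theta> 1) \<theta> w wt"
proof -
  have rec: "wt t = tilt (wt (t - 1)) (- \<theta> (t - 1) *\<^sub>R l (t - 1))" if "t \<in> {2..T}" for t
    using wt that by (simp add: tilt_def)
  show ?thesis
  proof (rule optimistic_regret_boundsI[OF _ _ a])
    fix t assume t: "t \<in> {1..T}"
    show "l t \<in> subdiff (\<phi> t) (w t)" using sg t by blast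
    show "subdiff (\<phi> t) u \<noteq> {}" using dom u t by blast
    show "wt t \<in> prob_simplex" using omd_iterates[OF a wt1 rec t] by blast
    show "w t = tilt (wt t) (- \<theta> t *\<^sub>R lh t)" using w t by (simp add: tilt_def)
    show "0 < \<theta> t" using mono pos t by (meson atLeastAtMost_iff less_le_trans order_refl)
  next
    fix R assume "abs_continuous u a"
      and "\<And>t. t \<in> {1..T} \<Longrightarrow> w t \<bullet> l t + ln (mgf (wt t) (- \<theta> t *\<^sub>R l t)) / \<theta> t \<le> R t"
    from omd_linear_regret[OF a u this(1) pos _ wt1 rec this(2)] mono
    show "(\<Sum>t\<in>{1..T}. (w t - u) \<bullet> l t) \<le> 1 / \<theta> 1 * relent u a + (\<Sum>t\<in>{1..T}. R t)"
      by simp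
  qed (use pos in simp)
qed

theorem corollary4:
  fixes \<phi> :: "nat \<Rightarrow> real^'n \<Rightarrow> ereal"
    and l lh :: "nat \<Rightarrow> real^'n"
    and a u :: "real^'n"
    and T :: nat
  assumes proper: "\<forall>t\<in>{1..T}. proper (\<phi> t)"
    and dom: "\<forall>t\<in>{1..T}. prob_simplex \<subseteq> {x. subdiff (\<phi> t) x \<noteq> {}}"
    and a: "a \<in> prob_simplex"
    and u: "u \<in> prob_simplex"
  shows
   "(\<forall>(\<eta>::nat \<Rightarrow> real) (w::nat \<Rightarrow> real^'n) (wt::nat \<Rightarrow> real^'n).
      (\<forall>s t. 1 \<le> s \<longrightarrow> s \<le> t \<longrightarrow> t \<le> T + 1 \<longrightarrow> \<eta> t \<le> \<eta> s) \<longrightarrow> 0 < \<eta> (T + 1) \<longrightarrow>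
      (\<forall>t\<in>{1..T}. wt t = vnorm (had a (vexp (- \<eta> t *\<^sub>R (\<Sum>i\<in>{1..<t}. l i))))) \<longrightarrow>
      (\<forall>t\<in>{1..T}. w t = vnorm (had (wt t) (vexp (- \<eta> t *\<^sub>R lh t)))) \<longrightarrow>
      (\<forall>t\<in>{1..T}. l t \<in> subdiff (\<phi> t) (w t)) \<longrightarrow>
      ((\<Sum>t\<in>{1..T}. \<phi> t (w t)) - (\<Sum>t\<in>{1..T}. \<phi> t u)
         \<le> ereal (1 / \<eta> (T + 1)) * kl u a
           + ereal (\<Sum>t\<in>{1..T}. 1 / \<eta> t * Qstar 2 (\<eta> t * infnorm (l t - lh t)))
           - (\<Sum>t\<in>{1..T}. ereal (1 / \<eta> t) * kl (w t) (wt t))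
       \<and>
       (\<Sum>t\<in>{1..T}. \<phi> t (w t)) - (\<Sum>t\<in>{1..T}. \<phi> t u)
         \<le> ereal (1 / \<eta> (T + 1)) * kl u a
           + ereal (\<Sum>t\<in>{1..T}. 1 / \<eta> t * Phi (\<eta> t) (l t) (lh t))
           - (\<Sum>t\<in>{1..T}. ereal (1 / \<eta> t) *
                kl (vnorm (had (wt t) (vexp (- \<eta> t *\<^sub>R hatprime (l t) (lh t))))) (wt t))))
    \<and>
    (\<forall>(\<theta>::nat \<Rightarrow> real) (w::nat \<Rightarrow> real^'n) (wt::nat \<Rightarrow> real^'n).
      0 < \<theta> 1 \<longrightarrow> (\<forall>s t. 1 \<le> s \<longrightarrow> s \<le> t \<longrightarrow> t \<le> T \<longrightarrow> \<theta> s \<le> \<theta> t) \<longrightarrow>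
      wt 1 = a \<longrightarrow>
      (\<forall>t\<in>{2..T}. wt t = vnorm (had (wt (t - 1)) (vexp (- \<theta> (t - 1) *\<^sub>R l (t - 1))))) \<longrightarrow>
      (\<forall>t\<in>{1..T}. w t = vnorm (had (wt t) (vexp (- \<theta> t *\<^sub>R lh t)))) \<longrightarrow>
      (\<forall>t\<in>{1..T}. l t \<in> subdiff (\<phi> t) (w t)) \<longrightarrow>
      ((\<Sum>t\<in>{1..T}. \<phi> t (w t)) - (\<Sum>t\<in>{1..T}. \<phi> t u)
         \<le> ereal (1 / \<theta> 1) * kl u a
           + ereal (\<Sum>t\<in>{1..T}. 1 / \<theta> t * Qstar 2 (\<theta> t * infnorm (l t - lh t)))
           - (\<Sum>t\<in>{1..T}. ereal (1 / \<theta> t) * kl (w t) (wt t))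
       \<and>
       (\<Sum>t\<in>{1..T}. \<phi> t (w t)) - (\<Sum>t\<in>{1..T}. \<phi> t u)
         \<le> ereal (1 / \<theta> 1) * kl u a
           + ereal (\<Sum>t\<in>{1..T}. 1 / \<theta> t * Phi (\<theta> t) (l t) (lh t))
           - (\<Sum>t\<in>{1..T}. ereal (1 / \<theta> t) *
                kl (vnorm (had (wt t) (vexp (- \<theta> t *\<^sub>R hatprime (l t) (lh t))))) (wt t))))"
  using ftrl_regret_bounds[OF dom a u] omd_regret_bounds[OF dom a u]
  unfolding optimistic_regret_bounds_def by blast

end
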